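(* Suppose that $2\le n_0<\infty$, that $S$ is submultiplicative on $[1,n_0]$, and that $S(n_0)=K\ge 2$. Then there exist $N_0>n_0$ and an extension of $S$ to $[1,N_0]$ which is submultiplicative on $[1,N_0]$ and satisfies $S(N_0)\ge 3K/2$.
   Context: Let $2\le n_0\le\infty$ and let $S$ be a real-valued function on $[1,n_0]$ (on $[1,\infty)$ if $n_0=\infty$). $S$ is called submultiplicative on $[1,n_0]$ if: (a) $S$ is piecewise-linear, continuous, strictly increasing and concave; (b) $S(x)=x$ for $1\le x\le 2$; (c) $S(xy)\le S(x)S(y)$ for all $x,y$ with $1\le x,y,xy\le n_0$. *)

theory Defs
  imports "HOL-Analysis.Analysis"
begin

definition piecewise_linear_on :: "real \<Rightarrow> real \<Rightarrow> (real \<Rightarrow> real) \<Rightarrow> bool" where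
  "piecewise_linear_on a b S \<longleftrightarrow>
     (\<exists>ps :: real list. ps \<noteq> [] \<and> sorted_wrt (<) ps \<and> hd ps = a \<and> last ps = b \<and>
        (\<forall>i. Suc i < length ps \<longrightarrow>
           (\<exists>m c. \<forall>x\<in>{ps ! i .. ps ! Suc i}. S x = m * x + c)))"

definition submultiplicative_on :: "real \<Rightarrow> (real \<Rightarrow> real) \<Rightarrow> bool" where
  "submultiplicative_on n0 S \<longleftrightarrow>
     piecewise_linear_on 1 n0 S \<and>
     continuous_on {1..n0} S \<and>
     strict_mono_on {1..n0} S \<and>
     concave_on {1..n0} S \<and>
     (\<forall>x\<in>{1..2}. S x = x) \<and>
     (\<forall>x y. 1 \<le> x \<longrightarrow> 1 \<le> y \<longrightarrow> x * y \<le> n0 \<longrightarrow> S (x * y) \<le> S x * S y)"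

end

theory Submission
  imports Defs
begin

text \<open>
  Let m > 0 be the slope of the last linear piece of S and K = S n0. Concavity forces every
  increment of S on [1, n0] to be at least m times its length, and S x >= K x / n0.
  Continue S beyond n0 by the line of slope s = m K / n0 through (n0, K), giving T; since
  s <= m, T stays concave. If x, y <= n0 < x y, write n0 = x u; then
  S x S y >= S x S u + S x m (y - u) >= K + s (x y - n0).
  If instead one factor exceeds n0, either the other factor lies in [1, 2], where S is the
  identity and s n0 <= K suffices, or T x >= 2 and T y >= K, so T x T y >= 2 K dominates
  T (x y) as long as the line has risen by at most K. Stopping where it has risen by K / 2
  gives T N0 = 3 K / 2.
\<close>

lemma concave_on_chord:
  fixes f :: "real \<Rightarrow> real"
  assumes "concave_on I f" "a \<in> I" "c \<in> I" "a \<le> b" "b \<le> c"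
  shows "f a * (c - b) + f c * (b - a) \<le> f b * (c - a)"
proof (cases "a = c")
  case True
  then show ?thesis using assms by simp
next
  case False
  then have ac: "a < c" using assms by simp
  define t where "t = (b - a) / (c - a)"
  have t: "0 \<le> t" "t \<le> 1" using ac assms by (auto simp: t_def field_simps)
  have ba: "b - a = t * (c - a)" and cb: "c - b = (1 - t) * (c - a)"
    using ac by (simp_all add: t_def field_simps)
  have "(1 - t) * a + t * c = b" using ba by (simp add: algebra_simps)
  then have concavity: "(1 - t) * f a + t * f c \<le> f b"
    using concave_onD[OF assms(1) t assms(2,3)] by simp
  have "f a * (c - b) + f c * (b - a) = ((1 - t) * f a + t * f c) * (c - a)"
    unfolding ba cb by (simp add: algebra_simps)
  also have "\<dots> \<le> f b * (c - a)"
    using concavity ac by (simp add: mult_right_mono)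
  finally show ?thesis .
qed

lemma concave_on_slope_ge_final_slope:
  fixes f :: "real \<Rightarrow> real"
  assumes concave: "concave_on {a..b} f" and "a \<le> q" "q < b"
    and affine: "\<forall>x\<in>{q..b}. f x = m * x + c"
    and "a \<le> u" "u \<le> y" "y \<le> b"
  shows "m * (y - u) \<le> f y - f u"
proof -
  have f_q: "f q = m * q + c" and f_b: "f b = m * b + c" using affine \<open>q < b\<close> by auto
  have to_end: "m * (b - v) \<le> f b - f v" if "a \<le> v" "v \<le> b" for v
  proof (cases "q \<le> v")
    case True
    then show ?thesis using affine that f_b by (simp add: algebra_simps)
  next
    case False
    have "f v * (b - q) + f b * (q - v) \<le> f q * (b - v)"
      using concave_on_chord[OF concave, of v b q] that False \<open>q < b\<close> by simp
    then have "(m * (b - v)) * (b - q) \<le> (f b - f v) * (b - q)"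
      unfolding f_q f_b by (simp add: algebra_simps)
    then show ?thesis using \<open>q < b\<close> by (simp add: mult_le_cancel_right)
  qed
  show ?thesis
  proof (cases "u = b")
    case True
    then show ?thesis using assms by simp
  next
    case False
    then have "u < b" using assms by simp
    have "f u * (b - y) + f b * (y - u) \<le> f y * (b - u)"
      using concave_on_chord[OF concave, of u b y] assms by simp
    then have "(f b - f u) * (y - u) \<le> (f y - f u) * (b - u)" by (simp add: algebra_simps)
    moreover have "m * (b - u) * (y - u) \<le> (f b - f u) * (y - u)"
      using to_end[of u] assms by (intro mult_right_mono) auto
    ultimately have "(m * (y - u)) * (b - u) \<le> (f y - f u) * (b - u)"
      by (simp add: algebra_simps)
    then show ?thesis using \<open>u < b\<close> by (simp add: mult_le_cancel_right)
  qed
qed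

lemma sorted_wrt_less_le_last:
  fixes xs :: "'a :: linorder list"
  assumes "sorted_wrt (<) xs" "x \<in> set xs"
  shows "x \<le> last xs"
  using assms by (cases xs rule: rev_cases) (auto simp: sorted_wrt_append)

lemma piecewise_linear_on_final_piece:
  assumes "piecewise_linear_on a b f" "a < b"
  obtains q m c where "a \<le> q" "q < b" "\<forall>x\<in>{q..b}. f x = m * x + c"
proof -
  obtain ps where ps: "ps \<noteq> []" "sorted_wrt (<) ps" "hd ps = a" "last ps = b"
    and pieces: "\<And>i. Suc i < length ps \<Longrightarrow> \<exists>m c. \<forall>x\<in>{ps ! i .. ps ! Suc i}. f x = m * x + c"
    using assms(1) unfolding piecewise_linear_on_def by blast
  have "length ps \<noteq> 1"
    using ps assms(2) by (auto simp: length_Suc_conv)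
  then have j: "Suc (length ps - 2) < length ps" "Suc (length ps - 2) = length ps - 1"
    using ps(1) by (cases ps; auto)+
  define p where "p = ps ! (length ps - 2)"
  have p_last: "ps ! Suc (length ps - 2) = b" using ps(1,4) j by (simp add: last_conv_nth)
  have "p < b" using sorted_wrt_nth_less[OF ps(2) _ j(1)] p_last by (simp add: p_def)
  obtain m c where "\<forall>x\<in>{p..b}. f x = m * x + c"
    using pieces[OF j(1)] p_last by (auto simp: p_def)
  then show ?thesis
    by (intro that[of "max p a" m c]) (use \<open>p < b\<close> assms(2) in auto)
qed

definition affine_extension :: "(real \<Rightarrow> real) \<Rightarrow> real \<Rightarrow> real \<Rightarrow> real \<Rightarrow> real" where
  "affine_extension f b s x = (if x \<le> b then f x else f b + s * (x - b))"

lemma affine_extension_left [simp]: "x \<le> b \<Longrightarrow> affine_extension f b s x = f x"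
  by (simp add: affine_extension_def)

lemma affine_extension_right: "b \<le> x \<Longrightarrow> affine_extension f b s x = f b + s * (x - b)"
  by (auto simp: affine_extension_def)

lemma piecewise_linear_on_affine_extension:
  assumes "piecewise_linear_on a b f" "b < c"
  shows "piecewise_linear_on a c (affine_extension f b s)"
proof -
  obtain ps where ps: "ps \<noteq> []" "sorted_wrt (<) ps" "hd ps = a" "last ps = b"
    and pieces: "\<And>i. Suc i < length ps \<Longrightarrow> \<exists>m c. \<forall>x\<in>{ps ! i .. ps ! Suc i}. f x = m * x + c"
    using assms(1) unfolding piecewise_linear_on_def by blast
  have below_b: "x \<le> b" if "x \<in> set ps" for x
    using sorted_wrt_less_le_last[OF ps(2) that] ps(4) by simp
  have "\<exists>m d. \<forall>x\<in>{(ps @ [c]) ! i .. (ps @ [c]) ! Suc i}. affine_extension f b s x = m * x + d"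
    if i: "Suc i < length (ps @ [c])" for i
  proof (cases "Suc i < length ps")
    case True
    then have "ps ! Suc i \<le> b" using below_b nth_mem by blast
    then show ?thesis using pieces[OF True] True by (auto simp: nth_append)
  next
    case False
    then have "i = length ps - 1" "Suc i = length ps" using i by simp_all
    then have "(ps @ [c]) ! i = b" "(ps @ [c]) ! Suc i = c"
      using ps(1,4) by (auto simp: nth_append last_conv_nth)
    moreover have "\<forall>x\<in>{b..c}. affine_extension f b s x = s * x + (f b - s * b)"
      by (auto simp: affine_extension_right algebra_simps)
    ultimately show ?thesis by metis
  qed
  moreover have "sorted_wrt (<) (ps @ [c])"
    using ps(2) below_b assms(2) by (auto simp: sorted_wrt_append intro: le_less_trans)
  ultimately show ?thesis
    unfolding piecewise_linear_on_def using ps by (intro exI[of _ "ps @ [c]"]) auto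
qed

lemma continuous_on_affine_extension:
  assumes "continuous_on {a..b} f" "a \<le> b" "b \<le> c"
  shows "continuous_on {a..c} (affine_extension f b s)"
proof -
  have "continuous_on {a..b} (affine_extension f b s)"
    using assms(1) by (rule continuous_on_eq) simp
  moreover have "continuous_on {b..c} (\<lambda>x. f b + s * (x - b))" by (intro continuous_intros)
  then have "continuous_on {b..c} (affine_extension f b s)"
    by (rule continuous_on_eq) (simp add: affine_extension_right)
  moreover have "{a..c} = {a..b} \<union> {b..c}" using assms(2,3) by auto
  ultimately show ?thesis by (metis continuous_on_closed_Un closed_atLeastAtMost)
qed

lemma strict_mono_on_affine_extension:
  assumes "strict_mono_on {a..b} f" "0 < s"
  shows "strict_mono_on {a..c} (affine_extension f b s)"
proof (rule strict_mono_onI)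
  fix x y assume xy: "x \<in> {a..c}" "y \<in> {a..c}" "x < y"
  show "affine_extension f b s x < affine_extension f b s y"
  proof (cases "y \<le> b")
    case True
    then show ?thesis using xy strict_mono_onD[OF assms(1)] by auto
  next
    case y_right: False
    show ?thesis
    proof (cases "x \<le> b")
      case True
      then have "f x \<le> f b"
        using xy strict_mono_onD[OF assms(1), of x b] by (cases "x = b") auto
      moreover have "0 < s * (y - b)" using y_right assms(2) by simp
      ultimately show ?thesis
        using True y_right by (simp add: affine_extension_right)
    next
      case False
      then show ?thesis using xy y_right assms(2) by (simp add: affine_extension_def)
    qed
  qed
qed

lemma concave_on_affine_extension:
  fixes f :: "real \<Rightarrow> real"
  assumes concave: "concave_on {a..b} f"
    and below_line: "\<And>u. u \<in> {a..b} \<Longrightarrow> f u \<le> f b - s * (b - u)"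
  shows "concave_on {a..c} (affine_extension f b s)"
proof (rule concave_on_linorderI)
  let ?g = "affine_extension f b s" and ?L = "\<lambda>x. f b + s * (x - b)"
  fix t x y :: real
  assume t: "0 < t" "t < 1" and xy: "x \<in> {a..c}" "y \<in> {a..c}" "x < y"
  define z where "z = (1 - t) * x + t * y"
  have z_x: "z - x = t * (y - x)" and y_z: "y - z = (1 - t) * (y - x)"
    by (simp_all add: z_def algebra_simps)
  have "0 \<le> t * (y - x)" "0 \<le> (1 - t) * (y - x)" using t xy by simp_all
  then have z: "x \<le> z" "z \<le> y" unfolding atomize_conj using z_x y_z by argo
  have "(1 - t) * ?g x + t * ?g y \<le> ?g z"
  proof (cases "y \<le> b")
    case True
    then show ?thesis
      using concave_onD[OF concave, of t x y] t xy z by (simp add: z_def)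
  next
    case y_right: False
    show ?thesis
    proof (cases "b \<le> x")
      case True
      then show ?thesis using z by (simp add: affine_extension_right z_def algebra_simps)
    next
      case x_left: False
      have g_x: "?g x = f x" and g_y: "?g y = ?L y"
        using x_left y_right by (auto simp: affine_extension_right)
      have slope_x: "s * (b - x) \<le> f b - f x" using below_line[of x] xy x_left by simp
      then have f_x: "f x \<le> ?L x" by (simp add: algebra_simps)
      show ?thesis
      proof (cases "b \<le> z")
        case True
        have "(1 - t) * f x \<le> (1 - t) * ?L x" using f_x t by simp
        then show ?thesis
          using True by (simp add: g_x g_y affine_extension_right z_def algebra_simps)
      next
        case False
        have chord: "f x * (b - z) + f b * (z - x) \<le> f z * (b - x)"
          using concave_on_chord[OF concave, of x b z] xy x_left z False by simp
        have "((1 - t) * f x + t * ?L y) * (b - x)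
            = f x * (b - x) + t * ((f b - f x) * (b - x) + s * (b - x) * (y - b))"
          by (simp add: algebra_simps)
        also have "\<dots> \<le> f x * (b - x) + t * ((f b - f x) * (b - x) + (f b - f x) * (y - b))"
          using slope_x t y_right x_left by (intro add_left_mono mult_left_mono mult_right_mono) auto
        also have "\<dots> = f x * (b - x) + (f b - f x) * (t * (y - x))"
          by (simp add: algebra_simps)
        also have "\<dots> = f x * (b - z) + f b * (z - x)"
          unfolding z_x[symmetric] by (simp add: algebra_simps)
        finally have "((1 - t) * f x + t * ?L y) * (b - x) \<le> f z * (b - x)"
          using chord by linarith
        then show ?thesis
          using x_left False by (simp add: g_x g_y mult_le_cancel_right)
      qed
    qed
  qed
  then show "(1 - t) * ?g x + t * ?g y \<le> ?g ((1 - t) *\<^sub>R x + t *\<^sub>R y)"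
    by (simp add: z_def)
qed simp

context
  fixes S :: "real \<Rightarrow> real" and n0 :: real
  assumes n0_ge_2: "2 \<le> n0" and submult: "submultiplicative_on n0 S"
begin

lemma submultiplicative_on_concave: "concave_on {1..n0} S"
  and submultiplicative_on_id: "x \<in> {1..2} \<Longrightarrow> S x = x"
  and submultiplicative_on_mult: "1 \<le> x \<Longrightarrow> 1 \<le> y \<Longrightarrow> x * y \<le> n0 \<Longrightarrow> S (x * y) \<le> S x * S y"
  using submult unfolding submultiplicative_on_def by blast+

lemma submultiplicative_on_mono: "1 \<le> x \<Longrightarrow> x \<le> y \<Longrightarrow> y \<le> n0 \<Longrightarrow> S x \<le> S y"
  using submult strict_mono_onD[of "{1..n0}" S x y] unfolding submultiplicative_on_def
  by (cases "x = y") auto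

lemma submultiplicative_on_ge_1: "1 \<le> x \<Longrightarrow> x \<le> n0 \<Longrightarrow> 1 \<le> S x"
  using submultiplicative_on_mono[of 1 x] submultiplicative_on_id[of 1] by simp

lemma submultiplicative_on_end_ge_2: "2 \<le> S n0"
  using submultiplicative_on_mono[of 2 n0] submultiplicative_on_id[of 2] n0_ge_2 by simp

lemma submultiplicative_on_end_le: "S n0 \<le> n0"
  using concave_on_chord[OF submultiplicative_on_concave, of 1 n0 2] submultiplicative_on_id[of 1] submultiplicative_on_id[of 2] n0_ge_2
  by simp

lemma submultiplicative_on_end_quotient_le: "x \<in> {1..n0} \<Longrightarrow> S n0 * x \<le> S x * n0"
proof -
  assume x: "x \<in> {1..n0}"
  have chord: "(n0 - x) + S n0 * (x - 1) \<le> S x * (n0 - 1)"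
    using concave_on_chord[OF submultiplicative_on_concave, of 1 n0 x] x n0_ge_2 submultiplicative_on_id[of 1] by simp
  have "(S n0 * x) * (n0 - 1) = n0 * ((n0 - x) + S n0 * (x - 1)) - (n0 - x) * (n0 - S n0)"
    by (simp add: algebra_simps)
  also have "\<dots> \<le> n0 * ((n0 - x) + S n0 * (x - 1))"
    using x submultiplicative_on_end_le by simp
  also have "\<dots> \<le> (S x * n0) * (n0 - 1)"
    using mult_left_mono[OF chord, of n0] n0_ge_2 by (simp add: algebra_simps)
  finally show ?thesis using n0_ge_2 by (simp add: mult_le_cancel_right)
qed

lemma submultiplicative_on_linear_growth:
  obtains m where "0 < m" "\<And>u y. 1 \<le> u \<Longrightarrow> u \<le> y \<Longrightarrow> y \<le> n0 \<Longrightarrow> m * (y - u) \<le> S y - S u"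
proof -
  have "piecewise_linear_on 1 n0 S" "1 < n0"
    using submult n0_ge_2 unfolding submultiplicative_on_def by auto
  then obtain q m c where q: "1 \<le> q" "q < n0" and affine: "\<forall>x\<in>{q..n0}. S x = m * x + c"
    by (rule piecewise_linear_on_final_piece)
  have growth: "m * (y - u) \<le> S y - S u" if "1 \<le> u" "u \<le> y" "y \<le> n0" for u y
    using concave_on_slope_ge_final_slope[OF submultiplicative_on_concave q affine that] .
  have "S q < S n0" using submult q unfolding submultiplicative_on_def
    by (auto intro: strict_mono_onD)
  then have "m * q < m * n0" using affine q by simp
  then have "0 < m" using mult_less_cancel_left[of m q n0] q by auto
  with growth show ?thesis using that by blast
qed

context
  fixes m s :: real
  assumes growth: "\<And>u y. 1 \<le> u \<Longrightarrow> u \<le> y \<Longrightarrow> y \<le> n0 \<Longrightarrow> m * (y - u) \<le> S y - S u"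
    and s_pos: "0 < s" and s_bound: "s * n0 \<le> m * S n0"
begin

abbreviation T :: "real \<Rightarrow> real" where
  "T \<equiv> affine_extension S n0 s"

lemma growth_rate_le_1: "m \<le> 1"
  using growth[of 1 2] submultiplicative_on_id[of 1] submultiplicative_on_id[of 2] n0_ge_2 by simp

lemma growth_rate_pos: "0 < m"
proof -
  have "0 < s * n0" using s_pos n0_ge_2 by simp
  then have "0 < m * S n0" using s_bound by linarith
  then show ?thesis using submultiplicative_on_end_ge_2 by (simp add: zero_less_mult_iff)
qed

lemma slope_le_growth_rate: "s \<le> m"
proof -
  have "m * S n0 \<le> m * n0" using growth_rate_pos submultiplicative_on_end_le by simp
  then have "s * n0 \<le> m * n0" using s_bound by linarith
  then show ?thesis using n0_ge_2 by (simp add: mult_le_cancel_right)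
qed

lemma slope_mult_end_le: "s * n0 \<le> S n0"
proof -
  have "m * S n0 \<le> 1 * S n0" using growth_rate_le_1 submultiplicative_on_end_ge_2 by (intro mult_right_mono) auto
  then show ?thesis using s_bound by simp
qed

lemma below_extension_line: "u \<in> {1..n0} \<Longrightarrow> S u \<le> S n0 - s * (n0 - u)"
  using growth[of u n0] slope_le_growth_rate mult_right_mono[of s m "n0 - u"] by auto

lemma affine_extension_mult_large_factor:
  assumes x: "1 \<le> x" and y: "n0 < y" and small: "s * (x * y - n0) \<le> S n0"
  shows "T (x * y) \<le> T x * T y"
proof -
  have "y \<le> x * y" using x y n0_ge_2 by (simp add: mult_le_cancel_right1)
  then have T_xy: "T (x * y) = S n0 + s * (x * y - n0)" and T_y: "T y = S n0 + s * (y - n0)"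
    using y by (simp_all add: affine_extension_right)
  show ?thesis
  proof (cases "x \<le> 2")
    case True
    then have "T x = x" using x n0_ge_2 submultiplicative_on_id by simp
    moreover have "s * n0 * (x - 1) \<le> S n0 * (x - 1)"
      using slope_mult_end_le x by (intro mult_right_mono) auto
    ultimately show ?thesis unfolding T_xy T_y by (simp add: algebra_simps)
  next
    case False
    have "2 \<le> T x"
    proof (cases "x \<le> n0")
      case True
      then show ?thesis using submultiplicative_on_mono[of 2 x] submultiplicative_on_id[of 2] False by simp
    next
      case False
      then have "0 \<le> s * (x - n0)" using s_pos by simp
      then show ?thesis using False submultiplicative_on_end_ge_2 by (simp add: affine_extension_right)
    qed
    moreover have "S n0 \<le> T y" using T_y s_pos y by simp
    ultimately have "2 * S n0 \<le> T x * T y" using submultiplicative_on_end_ge_2 by (intro mult_mono) auto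
    then show ?thesis using T_xy small by simp
  qed
qed

lemma affine_extension_mult_across:
  assumes x: "1 \<le> x" "x \<le> n0" and y: "1 \<le> y" "y \<le> n0" and xy: "n0 < x * y"
  shows "T (x * y) \<le> T x * T y"
proof -
  define u where "u = n0 / x"
  have x_u: "x * u = n0" and u: "1 \<le> u" "u \<le> y"
    using x y xy by (auto simp: u_def field_simps)
  have "S n0 \<le> S x * S u" using submultiplicative_on_mult[of x u] x u x_u by simp
  moreover have "S x * (m * (y - u)) \<le> S x * (S y - S u)"
    using growth[of u y] u y submultiplicative_on_ge_1[of x] x by (intro mult_left_mono) auto
  ultimately have "S n0 + S x * (m * (y - u)) \<le> S x * S y" by (simp add: algebra_simps)
  moreover have "s * (x * y - n0) \<le> S x * (m * (y - u))"
  proof -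
    have "(s * n0) * (x * (y - u)) \<le> (m * S n0) * (x * (y - u))"
      using s_bound x u by (intro mult_right_mono) auto
    also have "\<dots> = m * (y - u) * (S n0 * x)" by (simp add: algebra_simps)
    also have "\<dots> \<le> m * (y - u) * (S x * n0)"
      using submultiplicative_on_end_quotient_le[of x] x u growth_rate_pos by (intro mult_left_mono) auto
    finally have "(s * (x * y - n0)) * n0 \<le> (S x * (m * (y - u))) * n0"
      using x_u by (simp add: algebra_simps)
    then show ?thesis using n0_ge_2 by (simp add: mult_le_cancel_right)
  qed
  ultimately show ?thesis
    using xy x y by (simp add: affine_extension_right)
qed

lemma submultiplicative_on_affine_extension:
  assumes "n0 < N0" and "s * (N0 - n0) \<le> S n0"
  shows "submultiplicative_on N0 T"
  unfolding submultiplicative_on_def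
proof (intro conjI ballI allI impI)
  show "piecewise_linear_on 1 N0 T" "continuous_on {1..N0} T" "strict_mono_on {1..N0} T"
    using submult assms(1) n0_ge_2 s_pos unfolding submultiplicative_on_def
    by (auto intro: piecewise_linear_on_affine_extension continuous_on_affine_extension
        strict_mono_on_affine_extension)
  show "concave_on {1..N0} T"
    using concave_on_affine_extension[OF submultiplicative_on_concave] below_extension_line by blast
  show "T x = x" if "x \<in> {1..2}" for x
    using that n0_ge_2 submultiplicative_on_id by simp
  fix x y :: real assume x: "1 \<le> x" and y: "1 \<le> y" and xy: "x * y \<le> N0"
  have "s * (x * y - n0) \<le> s * (N0 - n0)" using xy s_pos by (intro mult_left_mono) auto
  then have small: "s * (x * y - n0) \<le> S n0" using assms(2) by simp
  consider "n0 < y" | "n0 < x" | "x \<le> n0" "y \<le> n0" "x * y \<le> n0"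
    | "x \<le> n0" "y \<le> n0" "n0 < x * y" by linarith
  then show "T (x * y) \<le> T x * T y"
  proof cases
    case 1
    then show ?thesis using affine_extension_mult_large_factor x small by blast
  next
    case 2
    then show ?thesis using affine_extension_mult_large_factor[of y x] y small by (simp add: mult.commute)
  next
    case 3
    then show ?thesis using submultiplicative_on_mult x y by simp
  next
    case 4
    then show ?thesis using affine_extension_mult_across x y by blast
  qed
qed

end

end

theorem lemma2p4:
  fixes S :: "real \<Rightarrow> real" and n0 K :: real
  assumes "2 \<le> n0"
    and "submultiplicative_on n0 S"
    and "S n0 = K"
    and "K \<ge> 2"
  shows "\<exists>N0 T. N0 > n0 \<and> (\<forall>x\<in>{1..n0}. T x = S x) \<and>
           submultiplicative_on N0 T \<and> T N0 \<ge> 3 * K / 2"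
proof -
  obtain m where "0 < m"
    and growth: "\<And>u y. 1 \<le> u \<Longrightarrow> u \<le> y \<Longrightarrow> y \<le> n0 \<Longrightarrow> m * (y - u) \<le> S y - S u"
    using submultiplicative_on_linear_growth[OF assms(1,2)] by blast
  define s where "s = m * K / n0"
  define N0 where "N0 = n0 + K / (2 * s)"
  have "0 < s" "s * n0 = m * S n0" using \<open>0 < m\<close> assms by (simp_all add: s_def)
  moreover have "n0 < N0" "s * (N0 - n0) = K / 2" using \<open>0 < s\<close> assms by (simp_all add: N0_def)
  ultimately have "submultiplicative_on N0 (affine_extension S n0 s)"
    using submultiplicative_on_affine_extension[OF assms(1,2) growth] assms(3,4) by simp
  moreover have "affine_extension S n0 s N0 = 3 * K / 2"
    using \<open>n0 < N0\<close> \<open>s * (N0 - n0) = K / 2\<close> assms(3) by (simp add: affine_extension_right)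
  ultimately show ?thesis
    using \<open>n0 < N0\<close> by (intro exI[of _ N0] exI[of _ "affine_extension S n0 s"]) auto
qed

end
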